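(* Define the relation $\sim$ on $\mathcal{T}$ by $x \sim y \iff \delta(x,y) = 0$ (warping identification). Then $\sim$ is an equivalence relation on $\mathcal{T}$.
   Context: A time series of length $n\ge 1$ is a finite sequence $x=(x_1,\dots,x_n)$ of reals; $\mathcal{T}$ denotes the set of all time series of finite length. For $m,n\in\mathbb{N}$, a warping path of order $m\times n$ and length $\ell$ is a sequence $p=(p_1,\dots,p_\ell)$ of points $p_l=(i_l,j_l)\in[m]\times[n]$ (where $[n]=\{1,\dots,n\}$) with $p_1=(1,1)$, $p_\ell=(m,n)$, and $p_{l+1}-p_l\in\{(1,0),(0,1),(1,1)\}$ for all $l\in[\ell-1]$; $\mathcal{P}_{m,n}$ is the set of such paths. For $x$ of length $m$ and $y$ of length $n$, the cost along $p$ is $C_p(x,y)=\sum_{(i,j)\in p}(x_i-y_j)^2$, and the dtw-distance is $\delta(x,y)=\min\{\sqrt{C_p(x,y)} : p\in\mathcal{P}_{m,n}\}$. *)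

theory Defs
  imports "HOL-Analysis.Analysis"
begin

text \<open>Time series are finite nonempty lists of reals; component i (1-based) of x is x ! (i - 1).\<close>

definition time_series :: "real list set" where
  "time_series = {x. x \<noteq> []}"

definition warping_path :: "nat \<Rightarrow> nat \<Rightarrow> (nat \<times> nat) list \<Rightarrow> bool" where
  "warping_path m n p \<longleftrightarrow>
     p \<noteq> [] \<and>
     (\<forall>l < length p. fst (p ! l) \<in> {1..m} \<and> snd (p ! l) \<in> {1..n}) \<and>
     hd p = (1, 1) \<and> last p = (m, n) \<and>
     (\<forall>l. Suc l < length p \<longrightarrow>
        (fst (p ! Suc l), snd (p ! Suc l)) \<in>
          {(fst (p ! l) + 1, snd (p ! l)), (fst (p ! l), snd (p ! l) + 1),
           (fst (p ! l) + 1, snd (p ! l) + 1)})"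

definition warping_paths :: "nat \<Rightarrow> nat \<Rightarrow> (nat \<times> nat) list set" where
  "warping_paths m n = {p. warping_path m n p}"

definition path_cost :: "(nat \<times> nat) list \<Rightarrow> real list \<Rightarrow> real list \<Rightarrow> real" where
  "path_cost p x y = (\<Sum>(i, j) \<leftarrow> p. (x ! (i - 1) - y ! (j - 1))\<^sup>2)"

definition dtw :: "real list \<Rightarrow> real list \<Rightarrow> real" where
  "dtw x y = Min ((\<lambda>p. sqrt (path_cost p x y)) ` warping_paths (length x) (length y))"

definition warp_equiv :: "(real list \<times> real list) set" where
  "warp_equiv = {(x, y). x \<in> time_series \<and> y \<in> time_series \<and> dtw x y = 0}"

end

theory Submission
  imports Defs
begin

text \<open>
  A warping path has cost zero exactly when it only pairs equal values. Reading such a path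
  step by step, a move along one series alone is possible only where that series repeats a
  value, and a diagonal move passes to the next values of both series. Hence \<open>dtw x y = 0\<close>
  iff \<open>x\<close> and \<open>y\<close> agree after collapsing runs of equal consecutive values
  (\<open>remdups_adj\<close>), so the warping identification is the kernel of a function and
  therefore an equivalence relation.
\<close>

lemma successively_conv_nth:
  "successively P xs \<longleftrightarrow> (\<forall>l. Suc l < length xs \<longrightarrow> P (xs ! l) (xs ! Suc l))"
proof (induction P xs rule: successively.induct)
  case (3 P x y xs)
  then show ?case by (auto simp: less_Suc_eq_0_disj)
qed auto

lemma successively_le_bounds:
  fixes xs :: "'a::preorder list"
  assumes "successively (\<le>) xs" "z \<in> set xs"
  shows "hd xs \<le> z \<and> z \<le> last xs"
  using assms by (induction "(\<le>) :: 'a \<Rightarrow> _" xs arbitrary: z rule: successively.induct)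
    (fastforce intro: order_trans)+

lemma successively_less_imp_distinct:
  fixes f :: "'a \<Rightarrow> 'b::order"
  assumes "successively (\<lambda>a b. f a < f b) xs"
  shows "distinct xs"
proof -
  have "sorted_wrt (\<lambda>a b. f a < f b) xs"
    using assms by (subst (asm) successively_conv_sorted_wrt) (auto intro: transpI)
  then show ?thesis by (induction xs) auto
qed

definition warp_step :: "nat \<times> nat \<Rightarrow> nat \<times> nat \<Rightarrow> bool" where
  "warp_step a b \<longleftrightarrow> b \<in> {(fst a + 1, snd a), (fst a, snd a + 1), (fst a + 1, snd a + 1)}"

definition warp_chain :: "(nat \<times> nat) list \<Rightarrow> nat \<times> nat \<Rightarrow> nat \<times> nat \<Rightarrow> bool" where
  "warp_chain p a b \<longleftrightarrow> p \<noteq> [] \<and> hd p = a \<and> last p = b \<and> successively warp_step p"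

lemma warp_step_le: "warp_step a b \<Longrightarrow> a \<le> b"
  by (auto simp: warp_step_def less_eq_prod_def)

lemma warp_step_sum_less: "warp_step a b \<Longrightarrow> fst a + snd a < fst b + snd b"
  by (auto simp: warp_step_def)

lemma warp_chain_bounds: "warp_chain p a b \<Longrightarrow> q \<in> set p \<Longrightarrow> a \<le> q \<and> q \<le> b"
  unfolding warp_chain_def
  by (metis successively_le_bounds successively_mono warp_step_le)

lemma warp_chain_distinct: "warp_chain p a b \<Longrightarrow> distinct p"
  unfolding warp_chain_def
  by (auto intro: successively_less_imp_distinct[of "\<lambda>q. fst q + snd q"]
      successively_mono warp_step_sum_less)

lemma warp_chain_Cons:
  "warp_chain p b c \<Longrightarrow> warp_step a b \<Longrightarrow> warp_chain (a # p) a c"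
  unfolding warp_chain_def by (cases p) auto

lemma warp_chain_exists: "a \<le> b \<Longrightarrow> \<exists>p. warp_chain p a b"
proof (induction "fst b - fst a + (snd b - snd a)" arbitrary: a rule: less_induct)
  case less
  show ?case
  proof (cases "a = b")
    case True
    then show ?thesis by (intro exI[of _ "[a]"]) (simp add: warp_chain_def)
  next
    case False
    define a' where "a' = (if fst a < fst b then (fst a + 1, snd a) else (fst a, snd a + 1))"
    have "warp_step a a'" "a' \<le> b"
      "fst b - fst a' + (snd b - snd a') < fst b - fst a + (snd b - snd a)"
      using False less.prems by (auto simp: a'_def warp_step_def less_eq_prod_def prod_eq_iff)
    then show ?thesis using less.hyps warp_chain_Cons by blast
  qed
qed

lemma warping_path_iff_warp_chain: "warping_path m n p \<longleftrightarrow> warp_chain p (1, 1) (m, n)"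
proof
  assume "warping_path m n p"
  then show "warp_chain p (1, 1) (m, n)"
    unfolding warping_path_def warp_chain_def successively_conv_nth warp_step_def by simp
next
  assume chain: "warp_chain p (1, 1) (m, n)"
  have "fst (p ! l) \<in> {1..m} \<and> snd (p ! l) \<in> {1..n}" if "l < length p" for l
    using warp_chain_bounds[OF chain nth_mem[OF that]] by (auto simp: less_eq_prod_def)
  with chain show "warping_path m n p"
    unfolding warping_path_def warp_chain_def successively_conv_nth warp_step_def by simp
qed

lemma finite_warping_paths: "finite (warping_paths m n)"
proof (rule finite_subset)
  show "warping_paths m n \<subseteq> {p. set p \<subseteq> {1..m} \<times> {1..n} \<and> distinct p}"
    using warp_chain_bounds warp_chain_distinct
    by (fastforce simp: warping_paths_def warping_path_iff_warp_chain less_eq_prod_def)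
  show "finite {p. set p \<subseteq> {1..m} \<times> {1..n} \<and> distinct p}"
    by (rule finite_subset_distinct) simp
qed

lemma warping_paths_nonempty: "1 \<le> m \<Longrightarrow> 1 \<le> n \<Longrightarrow> warping_paths m n \<noteq> {}"
  using warp_chain_exists[of "(1, 1)" "(m, n)"]
  by (auto simp: warping_paths_def warping_path_iff_warp_chain less_eq_prod_def)

lemma hd_remdups_adj_drop: "i < length xs \<Longrightarrow> hd (remdups_adj (drop i xs)) = xs ! i"
  by (metis Cons_nth_drop_Suc list.sel(1) remdups_adj_Cons_alt)

lemma remdups_adj_drop_last: "Suc i = length xs \<Longrightarrow> remdups_adj (drop i xs) = [xs ! i]"
  by (metis Cons_nth_drop_Suc drop_all lessI order_refl remdups_adj.simps(2))

lemma remdups_adj_drop_step: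
  assumes "i' \<in> {i, Suc i}" "i' < length xs"
  shows "remdups_adj (drop i xs) =
    (if xs ! i = xs ! i' then remdups_adj (drop i' xs) else xs ! i # remdups_adj (drop i' xs))"
proof (cases "i' = i")
  case False
  with assms have "i' = Suc i" by simp
  with assms(2) have "drop i xs = xs ! i # xs ! i' # drop (Suc i') xs"
    and "drop i' xs = xs ! i' # drop (Suc i') xs"
    by (simp_all add: Cons_nth_drop_Suc)
  then show ?thesis by simp
qed simp

definition path_matches :: "(nat \<times> nat) list \<Rightarrow> real list \<Rightarrow> real list \<Rightarrow> bool" where
  "path_matches p x y \<longleftrightarrow> (\<forall>(i, j) \<in> set p. x ! (i - 1) = y ! (j - 1))"

lemma path_cost_nonneg: "0 \<le> path_cost p x y"
  unfolding path_cost_def by (induction p) auto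

lemma path_cost_eq_0_iff: "path_cost p x y = 0 \<longleftrightarrow> path_matches p x y"
proof (induction p)
  case (Cons q p)
  have "path_cost (q # p) x y = (x ! (fst q - 1) - y ! (snd q - 1))\<^sup>2 + path_cost p x y"
    by (simp add: path_cost_def split_def)
  with Cons path_cost_nonneg[of p x y] show ?case
    by (auto simp: path_matches_def add_nonneg_eq_0_iff)
qed (simp add: path_cost_def path_matches_def)

text \<open>Path points are 1-based: the point \<open>(Suc i, Suc j)\<close> pairs \<open>x ! i\<close> with \<open>y ! j\<close>,
  the heads of \<open>drop i x\<close> and \<open>drop j y\<close>.\<close>

lemma matching_chain_imp_remdups_adj_eq:
  assumes "warp_chain p (Suc i, Suc j) (length x, length y)" "path_matches p x y"
  shows "remdups_adj (drop i x) = remdups_adj (drop j y)"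
  using assms
proof (induction p arbitrary: i j)
  case (Cons q p)
  have q: "q = (Suc i, Suc j)" and head: "x ! i = y ! j"
    using Cons.prems by (auto simp: warp_chain_def path_matches_def)
  show ?case
  proof (cases p)
    case Nil
    then have "Suc i = length x" "Suc j = length y"
      using Cons.prems(1) q by (auto simp: warp_chain_def)
    then show ?thesis using head by (simp add: remdups_adj_drop_last)
  next
    case (Cons q' r)
    with Cons.prems q obtain i' j' where q': "q' = (Suc i', Suc j')"
      and step: "i' \<in> {i, Suc i}" "j' \<in> {j, Suc j}"
      by (auto simp: warp_chain_def warp_step_def)
    have tail: "warp_chain p (Suc i', Suc j') (length x, length y)" "path_matches p x y"
      using Cons.prems \<open>p = q' # r\<close> q' by (auto simp: warp_chain_def path_matches_def)
    then have "i' < length x" "j' < length y" and "x ! i' = y ! j'"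
      using warp_chain_bounds[OF tail(1), of q'] \<open>p = q' # r\<close> q'
      by (auto simp: less_eq_prod_def path_matches_def)
    with step head Cons.IH[OF tail] show ?thesis
      by (simp add: remdups_adj_drop_step)
  qed
qed (simp add: warp_chain_def)

lemma remdups_adj_drop_eq_advance:
  assumes "i < length x" "j < length y" "remdups_adj (drop i x) = remdups_adj (drop j y)"
    and "Suc i < length x \<or> Suc j < length y"
  obtains i' j' where "i' \<in> {i, Suc i}" "j' \<in> {j, Suc j}" "(i', j') \<noteq> (i, j)"
    "i' < length x" "j' < length y" "remdups_adj (drop i' x) = remdups_adj (drop j' y)"
proof -
  have head: "x ! i = y ! j"
    using hd_remdups_adj_drop assms(1-3) by metis
  consider "Suc i < length x" "x ! i = x ! Suc i" | "Suc j < length y" "y ! j = y ! Suc j"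
    | "Suc i < length x" "Suc j < length y" "x ! i \<noteq> x ! Suc i" "y ! j \<noteq> y ! Suc j"
  proof (cases "Suc i < length x \<and> Suc j < length y")
    case False
    \<comment> \<open>a series that has reached its end collapses to a single value, the other one does not\<close>
    have "x ! i = x ! Suc i" if "Suc i < length x" "Suc j = length y"
      using that assms(3) remdups_adj_drop_step[of "Suc i" i x] remdups_adj_drop_last[of j y]
      by (auto simp: eq_commute[of "[]"] split: if_splits)
    moreover have "y ! j = y ! Suc j" if "Suc j < length y" "Suc i = length x"
      using that assms(3) remdups_adj_drop_step[of "Suc j" j y] remdups_adj_drop_last[of i x]
      by (auto simp: eq_commute[of "[]"] split: if_splits)
    ultimately show ?thesis
      using False assms(1,2,4) that(1,2) by (metis Suc_lessI)
  qed auto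
  then show ?thesis
  proof cases
    case 1
    then show ?thesis using that[of "Suc i" j] assms remdups_adj_drop_step[of "Suc i" i x] by simp
  next
    case 2
    then show ?thesis using that[of i "Suc j"] assms remdups_adj_drop_step[of "Suc j" j y] by simp
  next
    case 3
    then show ?thesis
      using that[of "Suc i" "Suc j"] assms head
        remdups_adj_drop_step[of "Suc i" i x] remdups_adj_drop_step[of "Suc j" j y]
      by simp
  qed
qed

lemma remdups_adj_eq_imp_matching_chain:
  assumes "i < length x" "j < length y" "remdups_adj (drop i x) = remdups_adj (drop j y)"
  shows "\<exists>p. warp_chain p (Suc i, Suc j) (length x, length y) \<and> path_matches p x y"
  using assms
proof (induction "length x - i + (length y - j)" arbitrary: i j rule: less_induct)
  case less
  have head: "x ! i = y ! j"
    using hd_remdups_adj_drop less.prems by metis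
  show ?case
  proof (cases "Suc i < length x \<or> Suc j < length y")
    case True
    with less.prems obtain i' j' where step: "i' \<in> {i, Suc i}" "j' \<in> {j, Suc j}" "(i', j') \<noteq> (i, j)"
      and rest: "i' < length x" "j' < length y" "remdups_adj (drop i' x) = remdups_adj (drop j' y)"
      by (rule remdups_adj_drop_eq_advance)
    have "length x - i' + (length y - j') < length x - i + (length y - j)"
      using step rest(1,2) by auto
    with less.hyps rest obtain p where
      "warp_chain p (Suc i', Suc j') (length x, length y)" "path_matches p x y"
      by blast
    moreover have "warp_step (Suc i, Suc j) (Suc i', Suc j')"
      using step by (auto simp: warp_step_def)
    ultimately show ?thesis
      using head by (intro exI[of _ "(Suc i, Suc j) # p"]) (auto simp: warp_chain_Cons path_matches_def)
  next
    case False
    with less.prems have "length x = Suc i" "length y = Suc j" by auto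
    then show ?thesis
      using head by (intro exI[of _ "[(Suc i, Suc j)]"]) (simp add: warp_chain_def path_matches_def)
  qed
qed

lemma dtw_eq_0_iff_matching_path:
  assumes "x \<noteq> []" "y \<noteq> []"
  shows "dtw x y = 0 \<longleftrightarrow> (\<exists>p \<in> warping_paths (length x) (length y). path_matches p x y)"
proof -
  define S where "S = (\<lambda>p. sqrt (path_cost p x y)) ` warping_paths (length x) (length y)"
  have "finite S" "S \<noteq> {}"
    using assms finite_warping_paths warping_paths_nonempty
    by (auto simp: S_def Suc_le_eq)
  moreover have "\<forall>s \<in> S. 0 \<le> s"
    by (simp add: S_def path_cost_nonneg)
  ultimately have "Min S = 0 \<longleftrightarrow> 0 \<in> S"
    by (metis Min_in Min_le order_antisym)
  then show ?thesis
    by (auto simp: dtw_def S_def path_cost_eq_0_iff [symmetric] path_cost_nonneg)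
qed

lemma dtw_eq_0_iff_remdups_adj_eq:
  assumes "x \<noteq> []" "y \<noteq> []"
  shows "dtw x y = 0 \<longleftrightarrow> remdups_adj x = remdups_adj y"
proof -
  have "dtw x y = 0 \<longleftrightarrow>
      (\<exists>p. warp_chain p (Suc 0, Suc 0) (length x, length y) \<and> path_matches p x y)"
    using assms by (simp add: dtw_eq_0_iff_matching_path warping_paths_def warping_path_iff_warp_chain)
  also have "\<dots> \<longleftrightarrow> remdups_adj (drop 0 x) = remdups_adj (drop 0 y)"
    using assms matching_chain_imp_remdups_adj_eq[of _ 0 0 x y]
      remdups_adj_eq_imp_matching_chain[of 0 x 0 y]
    by auto
  finally show ?thesis by simp
qed

theorem proposition1:
  shows "equiv time_series warp_equiv"
proof (rule equivI)
  have warp_equiv_iff: "(x, y) \<in> warp_equiv \<longleftrightarrow>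
      x \<in> time_series \<and> y \<in> time_series \<and> remdups_adj x = remdups_adj y" for x y
    by (auto simp: warp_equiv_def time_series_def dtw_eq_0_iff_remdups_adj_eq)
  show "warp_equiv \<subseteq> time_series \<times> time_series"
    by (auto simp: warp_equiv_def)
  show "refl_on time_series warp_equiv"
    by (auto intro: refl_onI simp: warp_equiv_iff)
  show "sym warp_equiv"
    by (auto intro: symI simp: warp_equiv_iff)
  show "trans warp_equiv"
    by (auto intro: transI simp: warp_equiv_iff)
qed

end
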